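(* Let $p_1=(\alpha,r,\delta)$ be a condition, $y\in\ell^2$ be nicely hypercyclic, and $U_{q,\varepsilon}$ be a basic neighborhood ($q\in\mathbb Q^{<\omega}$, $\varepsilon$ a positive rational). Then there is a condition $p_2=(\beta,s,\eta)$ such that $p_2<p_1$ and, for some $k\le|\beta|$, $B^k_{\beta^+}$ maps $y$ nicely into $U_{q,\varepsilon}$.
   Context: $\omega=\{0,1,2,\dots\}$; $\ell^2$ is the Hilbert space of square-summable real sequences indexed by $\omega$. For nonempty $q\in\mathbb Q^{<\omega}$ and rational $\varepsilon>0$, $U_{q,\varepsilon}=\{x\in\ell^2:\lVert (x\upharpoonright|q|)-q\rVert_\infty<\varepsilon|q|^{-1/2}\text{ and }\lVert x\upharpoonright[|q|,\infty)\rVert_2<\varepsilon\}$; for $q$ empty, $U_{q,\varepsilon}=\{x:\lVert x\rVert_2<\varepsilon\}$. For $w\in\{1,2\}^\omega$, $B_w(x)(i)=w(i)x(i+1)$. A function $w$ on $\omega$ is $n$-nice at $k$ if $w(i)=w(k+i)$ for all $i<n$. $B_w^k$ maps $y$ nicely into $U_{q,\varepsilon}$ if $B_w^k(y)\in U_{q,\varepsilon}$, $w$ is $|q|$-nice at $k$, and $\lVert y\upharpoonright[k+|q|,\infty)\rVert_2<\varepsilon 2^{-k}$. $y$ is nicely hypercyclic if there is $w\in\{1,2\}^\omega$ such that for every $U_{q,\varepsilon}$ some $B_w^k$ maps $y$ nicely into $U_{q,\varepsilon}$. For $\alpha\in\{1,2\}^{<\omega}$, $\alpha^+$ is $\alpha$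 followed by all $2$'s. A condition is a triple $(\alpha,r,\delta)\in\{1,2\}^{<\omega}\times\mathbb Q^{<\omega}\times(\mathbb Q\cap(0,1))$ with $|\alpha|\ge|r|$ and $\delta<2^{-|\alpha|}$. For conditions, $(\alpha_2,r_2,\delta_2)<(\alpha_1,r_1,\delta_1)$ means: $\alpha_1$ is an initial segment of $\alpha_2$; $\overline{U_{r_2,\delta_2}}\subseteq U_{r_1,\delta_1}$; and for all $k\in[|\alpha_1|,|\alpha_2|)$, $B^k_{\alpha_2^+}[U_{r_2,\delta_2}]\subseteq\{z\in\ell^2:\lVert z\rVert_2<1\}$. *)

theory Defs
  imports "HOL-Analysis.Analysis"
begin

text \<open>Weights w in {1,2}^omega are functions nat => nat with values in {1,2};
  finite sequences alpha in {1,2}^{<omega} are nat lists with entries in {1,2};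
  q in Q^{<omega} is a rat list.\<close>

definition l2 :: "(nat \<Rightarrow> real) set" where
  "l2 = {x. summable (\<lambda>i. (x i)\<^sup>2)}"

definition l2norm :: "(nat \<Rightarrow> real) \<Rightarrow> real" where
  "l2norm x = sqrt (\<Sum>i. (x i)\<^sup>2)"

definition tailnorm :: "(nat \<Rightarrow> real) \<Rightarrow> nat \<Rightarrow> real" where
  "tailnorm x n = sqrt (\<Sum>i. (x (i + n))\<^sup>2)"

definition basicU :: "rat list \<Rightarrow> rat \<Rightarrow> (nat \<Rightarrow> real) set" where
  "basicU q \<epsilon> =
     (if q = [] then {x \<in> l2. l2norm x < real_of_rat \<epsilon>}
      else {x \<in> l2. (\<forall>i < length q. \<bar>x i - real_of_rat (q ! i)\<bar>
                              < real_of_rat \<epsilon> / sqrt (real (length q)))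
                    \<and> tailnorm x (length q) < real_of_rat \<epsilon>})"

definition l2closure :: "(nat \<Rightarrow> real) set \<Rightarrow> (nat \<Rightarrow> real) set" where
  "l2closure U = {x \<in> l2. \<forall>e>0. \<exists>z\<in>U. l2norm (\<lambda>i. x i - z i) < e}"

definition weights :: "(nat \<Rightarrow> nat) set" where
  "weights = {w. \<forall>i. w i \<in> {1, 2}}"

definition Bw :: "(nat \<Rightarrow> nat) \<Rightarrow> (nat \<Rightarrow> real) \<Rightarrow> (nat \<Rightarrow> real)" where
  "Bw w x = (\<lambda>i. real (w i) * x (Suc i))"

definition nice_at :: "(nat \<Rightarrow> nat) \<Rightarrow> nat \<Rightarrow> nat \<Rightarrow> bool" where
  "nice_at w n k \<longleftrightarrow> (\<forall>i<n. w i = w (k + i))"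

definition maps_nicely ::
  "(nat \<Rightarrow> nat) \<Rightarrow> nat \<Rightarrow> (nat \<Rightarrow> real) \<Rightarrow> rat list \<Rightarrow> rat \<Rightarrow> bool" where
  "maps_nicely w k y q \<epsilon> \<longleftrightarrow>
     (Bw w ^^ k) y \<in> basicU q \<epsilon> \<and> nice_at w (length q) k \<and>
     tailnorm y (k + length q) < real_of_rat \<epsilon> * 2 powi (- int k)"

definition nicely_hypercyclic :: "(nat \<Rightarrow> real) \<Rightarrow> bool" where
  "nicely_hypercyclic y \<longleftrightarrow>
     (\<exists>w\<in>weights. \<forall>q \<epsilon>. \<epsilon> > 0 \<longrightarrow> (\<exists>k. maps_nicely w k y q \<epsilon>))"

definition plus_ext :: "nat list \<Rightarrow> nat \<Rightarrow> nat" where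
  "plus_ext \<alpha> = (\<lambda>i. if i < length \<alpha> then \<alpha> ! i else 2)"

definition is_condition :: "nat list \<Rightarrow> rat list \<Rightarrow> rat \<Rightarrow> bool" where
  "is_condition \<alpha> r \<delta> \<longleftrightarrow>
     set \<alpha> \<subseteq> {1, 2} \<and> length \<alpha> \<ge> length r \<and> 0 < \<delta> \<and> \<delta> < 1 \<and>
     \<delta> < 2 powi (- int (length \<alpha>))"

definition cond_less ::
  "nat list \<Rightarrow> rat list \<Rightarrow> rat \<Rightarrow> nat list \<Rightarrow> rat list \<Rightarrow> rat \<Rightarrow> bool" where
  "cond_less \<alpha>2 r2 \<delta>2 \<alpha>1 r1 \<delta>1 \<longleftrightarrow>
     take (length \<alpha>1) \<alpha>2 = \<alpha>1 \<and> length \<alpha>1 \<le> length \<alpha>2 \<and>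
     l2closure (basicU r2 \<delta>2) \<subseteq> basicU r1 \<delta>1 \<and>
     (\<forall>k. length \<alpha>1 \<le> k \<and> k < length \<alpha>2 \<longrightarrow>
        (Bw (plus_ext \<alpha>2) ^^ k) ` basicU r2 \<delta>2 \<subseteq> {z \<in> l2. l2norm z < 1})"

end

theory Submission
  imports Defs
begin

text \<open>Let \<open>w\<close> witness that \<open>y\<close> is nicely hypercyclic. For a suitable rational scale \<open>S > 0\<close>
  pick a late time \<open>k\<close> at which \<open>B\<^sub>w\<^sup>k\<close> maps \<open>y\<close> nicely into \<open>U\<^bsub>q/S,\<epsilon>'\<^esub>\<close>, and let \<open>\<beta>\<close> be \<open>\<alpha>\<close>,
  followed by a block of 2's and a block of 1's up to length \<open>k\<close>, followed by a copy of its first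
  \<open>|q|\<close> letters. The copy makes \<open>\<beta>\<^sup>+\<close> \<open>|q|\<close>-nice at \<open>k\<close>, so on the first \<open>|q|\<close> coordinates both
  \<open>B\<^sup>k\<close> act as multiplication by the product of the first \<open>k\<close> weights; the length of the 2-block
  makes the product for \<open>\<beta>\<^sup>+\<close> exactly \<open>S\<close> times the one for \<open>w\<close>. Since \<open>k\<close> depends on \<open>S\<close>, the
  scale \<open>S = (\<Prod>\<alpha>) 2\<^sup>n / 2\<^bsup>|\<alpha>|\<^esup>\<close> must be fixed first; this is possible because the number
  of 1's among the first \<open>k\<close> weights of \<open>w\<close> is eventually either at least \<open>|\<alpha>|\<close> or constant.
  Finally any \<open>\<eta> \<le> \<delta>/2\<close> with \<open>2\<^bsup>|\<beta>|+1\<^esup> \<eta> \<le> 1\<close> makes \<open>(\<beta>, r, \<eta>)\<close> a condition below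
  \<open>(\<alpha>, r, \<delta>)\<close>, because \<open>\<parallel>B\<^sup>j x\<parallel> \<le> 2\<^sup>j \<parallel>x\<restriction>[j,\<infinity>)\<parallel>\<close>.\<close>

section \<open>Tails of square-summable sequences\<close>

lemma summable_l2_shift: "x \<in> l2 \<Longrightarrow> summable (\<lambda>i. (x (i + n))\<^sup>2)"
  unfolding l2_def by (simp add: summable_iff_shift[where f="\<lambda>i. (x i)\<^sup>2"])

lemma tailnorm_nonneg: "x \<in> l2 \<Longrightarrow> 0 \<le> tailnorm x n"
  unfolding tailnorm_def by (intro real_sqrt_ge_zero suminf_nonneg summable_l2_shift) auto

lemma tailnorm_sq: "x \<in> l2 \<Longrightarrow> (tailnorm x n)\<^sup>2 = (\<Sum>i. (x (i + n))\<^sup>2)"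
  unfolding tailnorm_def by (simp add: suminf_nonneg summable_l2_shift)

lemma l2norm_eq_tailnorm_0: "l2norm x = tailnorm x 0"
  by (simp add: l2norm_def tailnorm_def)

lemma tailnorm_antimono:
  assumes "x \<in> l2" and "m \<le> n"
  shows "tailnorm x n \<le> tailnorm x m"
proof -
  obtain d where n: "n = m + d" using assms(2) le_Suc_ex by blast
  have "(\<Sum>i. (x (i + m))\<^sup>2) = (\<Sum>i. (x (i + d + m))\<^sup>2) + (\<Sum>i<d. (x (i + m))\<^sup>2)"
    by (rule suminf_split_initial_segment[OF summable_l2_shift[OF assms(1)]])
  moreover have "0 \<le> (\<Sum>i<d. (x (i + m))\<^sup>2)" by (simp add: sum_nonneg)
  ultimately have "(\<Sum>i. (x (i + n))\<^sup>2) \<le> (\<Sum>i. (x (i + m))\<^sup>2)"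
    by (simp add: n ac_simps)
  then show ?thesis unfolding tailnorm_def by simp
qed

lemma tailnorm_le_scaled:
  assumes y: "y \<in> l2" and C: "0 \<le> C" and le: "\<And>i. \<bar>x (i + m)\<bar> \<le> C * \<bar>y (i + n)\<bar>"
  shows "summable (\<lambda>i. (x (i + m))\<^sup>2)" and "tailnorm x m \<le> C * tailnorm y n"
proof -
  have sy: "summable (\<lambda>i. C\<^sup>2 * (y (i + n))\<^sup>2)"
    by (intro summable_mult summable_l2_shift y)
  have sq: "(x (i + m))\<^sup>2 \<le> C\<^sup>2 * (y (i + n))\<^sup>2" for i
    using power_mono[OF le[of i], of 2] by (simp add: power_mult_distrib)
  show sx: "summable (\<lambda>i. (x (i + m))\<^sup>2)"
    by (rule summable_comparison_test[OF _ sy]) (use sq in auto)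
  have "(\<Sum>i. (x (i + m))\<^sup>2) \<le> C\<^sup>2 * (\<Sum>i. (y (i + n))\<^sup>2)"
    using suminf_le[OF sq sx sy] suminf_mult[OF summable_l2_shift[OF y]] by simp
  then have "sqrt (\<Sum>i. (x (i + m))\<^sup>2) \<le> sqrt (C\<^sup>2) * sqrt (\<Sum>i. (y (i + n))\<^sup>2)"
    by (metis real_sqrt_le_mono real_sqrt_mult)
  then show "tailnorm x m \<le> C * tailnorm y n" using C by (simp add: tailnorm_def)
qed

lemma l2_diff:
  assumes "x \<in> l2" and "z \<in> l2"
  shows "(\<lambda>i. x i - z i) \<in> l2"
proof -
  have "(x i - z i)\<^sup>2 \<le> 2 * (x i)\<^sup>2 + 2 * (z i)\<^sup>2" for i
    using zero_le_power2[of "x i + z i"] by (simp add: power2_eq_square algebra_simps)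
  moreover have "summable (\<lambda>i. 2 * (x i)\<^sup>2 + 2 * (z i)\<^sup>2)"
    using assms unfolding l2_def by (intro summable_add summable_mult) auto
  ultimately show ?thesis unfolding l2_def
    by (auto intro: summable_comparison_test')
qed

lemma abs_le_l2norm:
  assumes "x \<in> l2"
  shows "\<bar>x i\<bar> \<le> l2norm x"
proof -
  have "(x i)\<^sup>2 \<le> (\<Sum>j. (x j)\<^sup>2)"
    using sum_le_suminf[of "\<lambda>j. (x j)\<^sup>2" "{i}"] assms unfolding l2_def by auto
  then show ?thesis unfolding l2norm_def by (metis real_sqrt_abs real_sqrt_le_mono)
qed

lemma tailnorm_sq_le_diff:
  assumes x: "x \<in> l2" and z: "z \<in> l2"
  shows "(tailnorm x n)\<^sup>2 \<le> 2 * (tailnorm z n)\<^sup>2 + 2 * (tailnorm (\<lambda>i. x i - z i) n)\<^sup>2"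
proof -
  let ?u = "\<lambda>i. x i - z i"
  have su: "summable (\<lambda>i. (?u (i + n))\<^sup>2)" by (rule summable_l2_shift[OF l2_diff[OF x z]])
  have sz: "summable (\<lambda>i. (z (i + n))\<^sup>2)" by (rule summable_l2_shift[OF z])
  have "(x (i + n))\<^sup>2 \<le> 2 * (z (i + n))\<^sup>2 + 2 * (?u (i + n))\<^sup>2" for i
    using zero_le_power2[of "2 * z (i + n) - x (i + n)"] by (simp add: power2_eq_square algebra_simps)
  then have "(\<Sum>i. (x (i + n))\<^sup>2) \<le> (\<Sum>i. 2 * (z (i + n))\<^sup>2 + 2 * (?u (i + n))\<^sup>2)"
    by (rule suminf_le[OF _ summable_l2_shift[OF x] summable_add[OF summable_mult[OF sz] summable_mult[OF su]]])
  also have "\<dots> = 2 * (\<Sum>i. (z (i + n))\<^sup>2) + 2 * (\<Sum>i. (?u (i + n))\<^sup>2)"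
    using sz su by (simp add: suminf_add[symmetric] suminf_mult)
  finally show ?thesis by (simp add: tailnorm_sq x z l2_diff)
qed

section \<open>Powers of the weighted backward shift\<close>

lemma Bw_power_apply: "(Bw w ^^ k) x i = real (\<Prod>j<k. w (i + j)) * x (i + k)"
proof (induction k arbitrary: i)
  case (Suc k)
  have "(Bw w ^^ Suc k) x i = real (w i) * (Bw w ^^ k) x (Suc i)"
    by (simp add: Bw_def)
  moreover have "(\<Prod>j<Suc k. w (i + j)) = w i * (\<Prod>j<k. w (Suc i + j))"
    by (subst prod.lessThan_Suc_shift) simp
  ultimately show ?case using Suc by simp
qed simp

lemma prod_shift_nice_at:
  assumes pos: "\<And>j. 0 < w j" and nice: "nice_at w m k" and "i \<le> m"
  shows "(\<Prod>j<k. w (i + j)) = (\<Prod>j<k. w j)"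
  using \<open>i \<le> m\<close>
proof (induction i)
  case (Suc i)
  then have "w (k + i) = w i" and IH: "(\<Prod>j<k. w (i + j)) = (\<Prod>j<k. w j)"
    using nice unfolding nice_at_def by simp_all
  have "w i * (\<Prod>j<k. w (Suc i + j)) = (\<Prod>j<Suc k. w (i + j))"
    by (subst prod.lessThan_Suc_shift) simp
  also have "\<dots> = w i * (\<Prod>j<k. w j)"
    using \<open>w (k + i) = w i\<close> IH by (simp add: add.commute)
  finally show ?case using pos[of i] by simp
qed simp

lemma Bw_power_apply_nice_at:
  assumes "\<And>j. 0 < w j" and "nice_at w m k" and "i \<le> m"
  shows "(Bw w ^^ k) x i = real (\<Prod>j<k. w j) * x (i + k)"
  using prod_shift_nice_at[OF assms] by (simp add: Bw_power_apply)

lemma abs_Bw_power_le: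
  assumes "\<And>j. w j \<le> c"
  shows "\<bar>(Bw w ^^ k) x i\<bar> \<le> real c ^ k * \<bar>x (i + k)\<bar>"
proof -
  have "(\<Prod>j<k. w (i + j)) \<le> (\<Prod>j<k. c)" by (rule prod_mono) (use assms in auto)
  then have "real (\<Prod>j<k. w (i + j)) \<le> real c ^ k"
    by (simp only: of_nat_power[symmetric] of_nat_le_iff prod_constant card_lessThan)
  then have "real (\<Prod>j<k. w (i + j)) * \<bar>x (i + k)\<bar> \<le> real c ^ k * \<bar>x (i + k)\<bar>"
    by (rule mult_right_mono) simp
  then show ?thesis by (simp add: Bw_power_apply abs_mult del: of_nat_prod)
qed

lemma Bw_power_l2:
  assumes w: "\<And>j. w j \<le> c" and x: "x \<in> l2"
  shows "(Bw w ^^ k) x \<in> l2" and "tailnorm ((Bw w ^^ k) x) n \<le> real c ^ k * tailnorm x (n + k)"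
proof -
  have le: "\<bar>(Bw w ^^ k) x (i + n)\<bar> \<le> real c ^ k * \<bar>x (i + (n + k))\<bar>" for i n
    using abs_Bw_power_le[of w c k x "i + n", OF w] by (simp add: add.assoc)
  show "tailnorm ((Bw w ^^ k) x) n \<le> real c ^ k * tailnorm x (n + k)"
    by (rule tailnorm_le_scaled(2)[OF x _ le]) simp
  show "(Bw w ^^ k) x \<in> l2"
    using tailnorm_le_scaled(1)[OF x _ le[of _ 0]] unfolding l2_def by simp
qed

section \<open>Basic neighbourhoods\<close>

lemma basicU_eq:
  "basicU q \<epsilon> = {x \<in> l2. (\<forall>i<length q. \<bar>x i - real_of_rat (q ! i)\<bar>
      < real_of_rat \<epsilon> / sqrt (real (length q))) \<and> tailnorm x (length q) < real_of_rat \<epsilon>}"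
  by (cases "q = []") (auto simp: basicU_def l2norm_eq_tailnorm_0)

lemma basicU_mono:
  assumes "\<epsilon> \<le> \<epsilon>'"
  shows "basicU q \<epsilon> \<subseteq> basicU q \<epsilon>'"
proof -
  have le: "real_of_rat \<epsilon> \<le> real_of_rat \<epsilon>'" using assms by (simp only: of_rat_less_eq)
  then have "real_of_rat \<epsilon> / sqrt (real (length q)) \<le> real_of_rat \<epsilon>' / sqrt (real (length q))"
    by (rule divide_right_mono) simp
  then show ?thesis unfolding basicU_eq using le by fastforce
qed

lemma l2closure_basicU_subset:
  assumes "0 < \<eta>" and "\<eta> \<le> \<delta> / 2"
  shows "l2closure (basicU r \<eta>) \<subseteq> basicU r \<delta>"
proof
  fix x assume "x \<in> l2closure (basicU r \<eta>)"
  then have x: "x \<in> l2"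
    and approx: "\<And>e. 0 < e \<Longrightarrow> \<exists>z\<in>basicU r \<eta>. l2norm (\<lambda>i. x i - z i) < e"
    unfolding l2closure_def by auto
  define L D E where "L = length r" and "D = real_of_rat \<delta>" and "E = real_of_rat \<eta>"
  define s where "s = sqrt (real L)"
  have "real_of_rat \<eta> \<le> real_of_rat (\<delta> / 2)" using assms(2) by (simp only: of_rat_less_eq)
  then have E0: "0 < E" and ED: "E \<le> D / 2"
    using assms(1) by (simp_all add: E_def D_def of_rat_divide)
  define e where "e = D / (4 * (s + 1))"
  have s0: "0 \<le> s" unfolding s_def by simp
  have e0: "0 < e" and eD: "e \<le> D / 4" using E0 ED s0 by (simp_all add: e_def field_simps)
  obtain z where "z \<in> basicU r \<eta>" and xz: "l2norm (\<lambda>i. x i - z i) < e" using approx[OF e0] by blast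
  then have z: "z \<in> l2" and zc: "\<And>i. i < L \<Longrightarrow> \<bar>z i - real_of_rat (r ! i)\<bar> < E / s"
    and zt: "tailnorm z L < E"
    unfolding basicU_eq L_def E_def s_def by auto
  let ?u = "\<lambda>i. x i - z i"
  have u: "?u \<in> l2" by (rule l2_diff[OF x z])
  have coord: "\<bar>x i - real_of_rat (r ! i)\<bar> < D / s" if "i < L" for i
  proof -
    have s: "0 < s" unfolding s_def using that by simp
    have "\<bar>?u i\<bar> < e" using abs_le_l2norm[OF u, of i] xz by simp
    moreover have "e < D / (4 * s)" using E0 ED s by (simp add: e_def field_simps)
    moreover have "E / s \<le> D / (2 * s)" using ED s by (simp add: field_simps)
    ultimately have "\<bar>x i - real_of_rat (r ! i)\<bar> < D / (4 * s) + D / (2 * s)"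
      using zc[OF that] by linarith
    also have "\<dots> < D / s" using E0 ED s by (simp add: field_simps)
    finally show ?thesis .
  qed
  have "tailnorm ?u L \<le> l2norm ?u"
    unfolding l2norm_eq_tailnorm_0 by (rule tailnorm_antimono[OF u]) simp
  then have "(tailnorm ?u L)\<^sup>2 < (D / 4)\<^sup>2"
    using xz eD tailnorm_nonneg[OF u] by (intro power_strict_mono) auto
  moreover have "(tailnorm z L)\<^sup>2 < (D / 2)\<^sup>2"
    using zt ED tailnorm_nonneg[OF z] by (intro power_strict_mono) auto
  ultimately have "(tailnorm x L)\<^sup>2 < 2 * (D / 2)\<^sup>2 + 2 * (D / 4)\<^sup>2"
    using tailnorm_sq_le_diff[OF x z, of L] by linarith
  also have "\<dots> < D\<^sup>2" using E0 ED by (simp add: power_divide)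
  finally have "(tailnorm x L)\<^sup>2 < D\<^sup>2" .
  then have tail: "tailnorm x L < D"
    by (rule power2_less_imp_less) (use E0 ED in simp)
  show "x \<in> basicU r \<delta>"
    unfolding basicU_eq using x coord tail by (simp add: L_def D_def s_def)
qed

lemma Bw_power_basicU_norm_less_1:
  assumes w: "\<And>j. w j \<le> 2" and x: "x \<in> basicU r \<eta>" and "length r \<le> k"
    and small: "2 ^ k * real_of_rat \<eta> \<le> 1"
  shows "(Bw w ^^ k) x \<in> {z \<in> l2. l2norm z < 1}"
proof -
  have x2: "x \<in> l2" and xt: "tailnorm x (length r) < real_of_rat \<eta>"
    using x unfolding basicU_eq by auto
  have "l2norm ((Bw w ^^ k) x) \<le> 2 ^ k * tailnorm x k"
    using Bw_power_l2(2)[OF w x2, where k = k and n = 0] by (simp add: l2norm_eq_tailnorm_0)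
  also have "\<dots> \<le> 2 ^ k * tailnorm x (length r)"
    using tailnorm_antimono[OF x2 \<open>length r \<le> k\<close>] by simp
  also have "\<dots> < 2 ^ k * real_of_rat \<eta>" using xt by simp
  finally show ?thesis using small Bw_power_l2(1)[OF w x2] by simp
qed

lemma basicU_rescale:
  assumes x: "x \<in> basicU (map (\<lambda>t. t / S) q) \<epsilon>'" and S: "0 < S" and "\<epsilon>' * S \<le> \<epsilon>"
    and z: "z \<in> l2" and zx: "\<And>i. i < length q \<Longrightarrow> z i = real_of_rat S * x i"
    and zt: "tailnorm z (length q) < real_of_rat \<epsilon>"
  shows "z \<in> basicU q \<epsilon>"
proof -
  define s where "s = sqrt (real (length q))"
  have "real_of_rat (\<epsilon>' * S) \<le> real_of_rat \<epsilon>" using assms(3) by (simp only: of_rat_less_eq)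
  then have \<epsilon>': "real_of_rat S * real_of_rat \<epsilon>' \<le> real_of_rat \<epsilon>" by (simp add: of_rat_mult mult.commute)
  have "\<bar>z i - real_of_rat (q ! i)\<bar> < real_of_rat \<epsilon> / s" if i: "i < length q" for i
  proof -
    have "\<bar>x i - real_of_rat (q ! i) / real_of_rat S\<bar> < real_of_rat \<epsilon>' / s"
      using x i unfolding basicU_eq s_def by (auto simp: of_rat_divide)
    have "z i - real_of_rat (q ! i) = real_of_rat S * (x i - real_of_rat (q ! i) / real_of_rat S)"
      using S by (simp add: zx[OF i] field_simps)
    then have "\<bar>z i - real_of_rat (q ! i)\<bar> = real_of_rat S * \<bar>x i - real_of_rat (q ! i) / real_of_rat S\<bar>"
      using S by (simp add: abs_mult)
    also have "\<dots> < real_of_rat S * (real_of_rat \<epsilon>' / s)"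
      using S \<open>\<bar>x i - _\<bar> < _\<close> by (intro mult_strict_left_mono) auto
    also have "\<dots> \<le> real_of_rat \<epsilon> / s"
      using \<epsilon>' by (simp add: divide_right_mono s_def)
    finally show ?thesis .
  qed
  then show ?thesis unfolding basicU_eq using z zt by (simp add: s_def)
qed

section \<open>Weights and finite words\<close>

lemma weightsD: "w \<in> weights \<Longrightarrow> w j = 1 \<or> w j = 2"
  unfolding weights_def by blast

lemma weights_pos: "w \<in> weights \<Longrightarrow> 0 < w j"
  using weightsD[of w j] by auto

lemma weights_le_2: "w \<in> weights \<Longrightarrow> w j \<le> 2"
  using weightsD[of w j] by auto

lemma plus_ext_in_weights: "set \<beta> \<subseteq> {1, 2} \<Longrightarrow> plus_ext \<beta> \<in> weights"
  unfolding weights_def plus_ext_def using nth_mem by fastforce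

lemma prod_weights_eq_power:
  assumes "w \<in> weights"
  shows "(\<Prod>j<k. w j) = 2 ^ (k - card {j. j < k \<and> w j = 1})"
proof (induction k)
  case (Suc k)
  let ?A = "{j. j < k \<and> w j = 1}"
  have "card ?A \<le> k" using card_mono[of "{..<k}" ?A] by auto
  moreover have "{j. j < Suc k \<and> w j = 1} = (if w k = 1 then insert k ?A else ?A)"
    by (auto simp: less_Suc_eq)
  moreover have "w k = 1 \<or> w k = 2" by (rule weightsD[OF assms])
  ultimately show ?case using Suc by (auto simp: Suc_diff_le)
qed simp

lemma mono_le_id_eventually_window:
  fixes g :: "nat \<Rightarrow> nat"
  assumes "mono g" and "\<And>k. g k \<le> k"
  shows "\<exists>n. \<forall>\<^sub>F k in sequentially. n \<le> g k \<and> g k + a \<le> k + n"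
proof (cases "\<exists>K. a \<le> g K")
  case True
  then obtain K where "a \<le> g K" by blast
  then have "\<forall>\<^sub>F k in sequentially. a \<le> g k \<and> g k + a \<le> k + a"
    using assms by (auto intro!: eventually_sequentiallyI[of K] dest: monoD[of g K] order_trans)
  then show ?thesis by blast
next
  case False
  then have fin: "finite (range g)" by (auto intro: finite_subset[of _ "{..<a}"] simp: not_le)
  define n where "n = Max (range g)"
  obtain K where K: "g K = n" using Max_in[OF fin] unfolding n_def by auto
  have "n \<le> g k \<and> g k + a \<le> k + n" if "max K a \<le> k" for k
  proof -
    have "g k \<le> n" unfolding n_def using fin by simp
    moreover have "n \<le> g k" using K monoD[OF assms(1), of K k] that by simp
    ultimately show ?thesis using that by simp
  qed
  then show ?thesis unfolding eventually_sequentially by blast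
qed

lemma word_with_prefix_and_product:
  assumes \<alpha>: "set \<alpha> \<subseteq> {1, 2}" and "length \<alpha> + e \<le> k" and "m \<le> k"
  obtains \<beta> where "take (length \<alpha>) \<beta> = \<alpha>" and "length \<beta> = k + m" and "set \<beta> \<subseteq> {1, 2}"
    and "nice_at (plus_ext \<beta>) m k" and "(\<Prod>j<k. plus_ext \<beta> j) = prod_list \<alpha> * 2 ^ e"
proof -
  define \<gamma> where "\<gamma> = \<alpha> @ replicate e 2 @ replicate (k - length \<alpha> - e) 1"
  define \<beta> where "\<beta> = \<gamma> @ take m \<gamma>"
  have \<gamma>: "length \<gamma> = k" using assms(2) by (simp add: \<gamma>_def)
  have \<beta>: "length \<beta> = k + m" using \<gamma> assms(3) by (simp add: \<beta>_def)
  have pe: "plus_ext \<beta> j = \<gamma> ! j" if "j < k" for j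
    using that \<gamma> \<beta> by (simp add: plus_ext_def \<beta>_def nth_append)
  have "take (length \<alpha>) \<beta> = \<alpha>" using assms(2) by (simp add: \<beta>_def \<gamma>_def)
  moreover have "set \<beta> \<subseteq> {1, 2}"
    using \<alpha> set_take_subset[of m \<gamma>] by (auto simp: \<beta>_def \<gamma>_def)
  moreover have "nice_at (plus_ext \<beta>) m k"
    unfolding nice_at_def
  proof (intro allI impI)
    fix i assume "i < m"
    then show "plus_ext \<beta> i = plus_ext \<beta> (k + i)"
      using pe[of i] \<gamma> \<beta> assms(3) by (simp add: plus_ext_def \<beta>_def nth_append)
  qed
  moreover have "(\<Prod>j<k. plus_ext \<beta> j) = prod_list \<alpha> * 2 ^ e"
  proof -
    have "(\<Prod>j<k. plus_ext \<beta> j) = (\<Prod>j<length \<gamma>. \<gamma> ! j)" using pe \<gamma> by simp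
    also have "\<dots> = prod_list \<gamma>" by (simp add: prod.list_conv_set_nth atLeast0LessThan)
    finally show ?thesis by (simp add: \<gamma>_def)
  qed
  ultimately show thesis using that \<beta> by blast
qed

section \<open>Extending conditions and rescaling nice hits\<close>

lemma exists_condition_below:
  assumes cond: "is_condition \<alpha> r \<delta>" and \<beta>: "set \<beta> \<subseteq> {1, 2}"
    and prefix: "take (length \<alpha>) \<beta> = \<alpha>"
  shows "\<exists>\<eta>. is_condition \<beta> r \<eta> \<and> cond_less \<beta> r \<eta> \<alpha> r \<delta>"
proof -
  have len: "length \<alpha> \<le> length \<beta>" using arg_cong[OF prefix, of length] by simp
  have r: "length r \<le> length \<alpha>" and \<delta>: "0 < \<delta>" "\<delta> < 1"
    using cond unfolding is_condition_def by auto
  define \<eta> :: rat where "\<eta> = min (\<delta> / 2) (1 / 2 ^ Suc (length \<beta>))"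
  have \<eta>: "0 < \<eta>" "\<eta> \<le> \<delta> / 2" "\<eta> \<le> 1 / 2 ^ Suc (length \<beta>)"
    using \<delta> by (simp_all add: \<eta>_def)
  have "\<eta> < 2 powi (- int (length \<beta>))"
    using \<eta>(3) by (simp add: power_int_minus field_simps)
  then have "is_condition \<beta> r \<eta>"
    using \<beta> r len \<eta> \<delta> unfolding is_condition_def by simp
  moreover have "(Bw (plus_ext \<beta>) ^^ k) ` basicU r \<eta> \<subseteq> {z \<in> l2. l2norm z < 1}"
    if "length \<alpha> \<le> k" and "k < length \<beta>" for k
  proof -
    have "real_of_rat \<eta> \<le> real_of_rat (1 / 2 ^ Suc (length \<beta>))"
      using \<eta>(3) by (simp only: of_rat_less_eq)
    also have "\<dots> = 1 / 2 ^ Suc (length \<beta>)"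
      by (simp only: of_rat_divide of_rat_power of_rat_1 of_rat_numeral_eq)
    finally have "2 ^ k * real_of_rat \<eta> \<le> 2 ^ k * (1 / 2 ^ Suc (length \<beta>))"
      by (rule mult_left_mono) simp
    also have "\<dots> \<le> 1" using that by (simp add: power_increasing del: power_Suc)
    finally show ?thesis
      using Bw_power_basicU_norm_less_1[OF weights_le_2[OF plus_ext_in_weights[OF \<beta>]]] r that
      by auto
  qed
  ultimately show ?thesis
    using prefix len l2closure_basicU_subset[OF \<eta>(1,2)] unfolding cond_less_def by blast
qed

lemma maps_nicely_mono:
  assumes "maps_nicely w k y q \<epsilon>'" and "\<epsilon>' \<le> \<epsilon>"
  shows "maps_nicely w k y q \<epsilon>"
proof -
  have "real_of_rat \<epsilon>' \<le> real_of_rat \<epsilon>" using assms(2) by (simp only: of_rat_less_eq)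
  then have "real_of_rat \<epsilon>' * 2 powi (- int k) \<le> real_of_rat \<epsilon> * 2 powi (- int k)"
    by (rule mult_right_mono) simp
  then have "tailnorm y (k + length q) < real_of_rat \<epsilon> * 2 powi (- int k)"
    using assms(1) unfolding maps_nicely_def by linarith
  then show ?thesis
    using assms basicU_mono[OF assms(2), of q] unfolding maps_nicely_def by auto
qed

lemma nicely_hypercyclic_tailnorm_pos:
  assumes y: "y \<in> l2" and "nicely_hypercyclic y"
  shows "0 < tailnorm y n"
proof (rule ccontr)
  assume "\<not> 0 < tailnorm y n"
  then have "(\<Sum>i. (y (i + n))\<^sup>2) = 0"
    using tailnorm_nonneg[OF y, of n] tailnorm_sq[OF y, of n] by simp
  then have "y (i + n) = 0" for i
    using suminf_eq_zero_iff[OF summable_l2_shift[OF y]] by simp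
  then have vanish: "y j = 0" if "n \<le> j" for j
    using that by (metis le_add_diff_inverse2)
  obtain w where w: "w \<in> weights" and hit: "\<And>q \<epsilon>. 0 < \<epsilon> \<Longrightarrow> \<exists>k. maps_nicely w k y q \<epsilon>"
    using assms(2) unfolding nicely_hypercyclic_def by blast
  define T where "T = (\<Sum>j<n. 2 ^ j * \<bar>y j\<bar>)"
  have bounded: "\<bar>(Bw w ^^ k) y 0\<bar> \<le> T" for k
  proof (cases "k < n")
    case True
    have "\<bar>(Bw w ^^ k) y 0\<bar> \<le> 2 ^ k * \<bar>y k\<bar>"
      using abs_Bw_power_le[of w 2 k y 0, OF weights_le_2[OF w]] by simp
    also have "\<dots> \<le> T"
      unfolding T_def by (rule member_le_sum[where f="\<lambda>j. 2 ^ j * \<bar>y j\<bar>"]) (use True in auto)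
    finally show ?thesis .
  next
    case False
    then show ?thesis by (simp add: Bw_power_apply vanish T_def sum_nonneg)
  qed
  define t :: nat where "t = nat \<lceil>T\<rceil> + 1"
  obtain k where "maps_nicely w k y [of_nat t] (1 / 2)" using hit by force
  then have "\<bar>(Bw w ^^ k) y 0 - real t\<bar> < 1 / 2"
    unfolding maps_nicely_def basicU_eq by (simp add: of_rat_divide)
  moreover have "T + 1 \<le> real t" unfolding t_def by linarith
  ultimately show False using bounded[of k] by linarith
qed

lemma nicely_hypercyclic_late_hits:
  assumes y: "y \<in> l2" and hc: "nicely_hypercyclic y"
  obtains w where "w \<in> weights" and "\<And>q \<epsilon> K. 0 < \<epsilon> \<Longrightarrow> \<exists>k\<ge>K. maps_nicely w k y q \<epsilon>"
proof -
  obtain w where w: "w \<in> weights" and hit: "\<And>q \<epsilon>. 0 < \<epsilon> \<Longrightarrow> \<exists>k. maps_nicely w k y q \<epsilon>"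
    using hc unfolding nicely_hypercyclic_def by blast
  have "\<exists>k\<ge>K. maps_nicely w k y q \<epsilon>" if "0 < \<epsilon>" for q \<epsilon> K
  proof -
    let ?\<tau> = "tailnorm y (K + length q)"
    obtain \<rho> :: rat where \<rho>: "0 < real_of_rat \<rho>" "real_of_rat \<rho> < ?\<tau>"
      using of_rat_dense[OF nicely_hypercyclic_tailnorm_pos[OF y hc]] by blast
    have "0 < min \<epsilon> \<rho>" using \<rho>(1) that by simp
    then obtain k where k: "maps_nicely w k y q (min \<epsilon> \<rho>)" using hit by blast
    have "(2::real) powi (- int k) \<le> 1" by (simp add: power_int_minus inverse_le_1_iff)
    then have "real_of_rat (min \<epsilon> \<rho>) * 2 powi (- int k) \<le> real_of_rat (min \<epsilon> \<rho>)"
      using \<open>0 < min \<epsilon> \<rho>\<close> by (simp add: mult_left_le)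
    also have "\<dots> \<le> real_of_rat \<rho>" by (simp only: of_rat_less_eq min.cobounded2)
    finally have "real_of_rat (min \<epsilon> \<rho>) * 2 powi (- int k) \<le> real_of_rat \<rho>" .
    then have "tailnorm y (k + length q) < ?\<tau>"
      using k \<rho>(2) unfolding maps_nicely_def by linarith
    then have "K \<le> k"
      using tailnorm_antimono[OF y, of "k + length q" "K + length q"] by linarith
    moreover have "maps_nicely w k y q \<epsilon>" by (rule maps_nicely_mono[OF k]) simp
    ultimately show ?thesis by blast
  qed
  then show thesis using that w by blast
qed

lemma maps_nicely_rescale:
  assumes hit: "maps_nicely w k y (map (\<lambda>t. t / S) q) \<epsilon>'"
    and v: "v \<in> weights" and w: "w \<in> weights" and y: "y \<in> l2"
    and nice: "nice_at v (length q) k"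
    and prod: "real (\<Prod>j<k. v j) = real_of_rat S * real (\<Prod>j<k. w j)"
    and S: "0 < S" and "\<epsilon>' \<le> \<epsilon>" and "\<epsilon>' * S \<le> \<epsilon>"
  shows "maps_nicely v k y q \<epsilon>"
proof -
  let ?m = "length q"
  have hU: "(Bw w ^^ k) y \<in> basicU (map (\<lambda>t. t / S) q) \<epsilon>'" and "nice_at w ?m k"
    and yt: "tailnorm y (k + ?m) < real_of_rat \<epsilon>' * 2 powi (- int k)"
    using hit unfolding maps_nicely_def by auto
  have coords: "(Bw v ^^ k) y i = real_of_rat S * (Bw w ^^ k) y i" if "i < ?m" for i
    using Bw_power_apply_nice_at[OF weights_pos[OF v] nice, of i]
      Bw_power_apply_nice_at[OF weights_pos[OF w] \<open>nice_at w ?m k\<close>, of i] that prod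
    by simp
  have \<epsilon>': "real_of_rat \<epsilon>' \<le> real_of_rat \<epsilon>" using assms(8) by (simp only: of_rat_less_eq)
  have "tailnorm ((Bw v ^^ k) y) ?m \<le> 2 ^ k * tailnorm y (?m + k)"
    using Bw_power_l2(2)[OF weights_le_2[OF v] y] by simp
  also have "\<dots> < 2 ^ k * (real_of_rat \<epsilon>' * 2 powi (- int k))"
    using yt by (simp add: add.commute)
  also have "\<dots> = real_of_rat \<epsilon>'" by (simp add: power_int_minus)
  finally have "tailnorm ((Bw v ^^ k) y) ?m < real_of_rat \<epsilon>" using \<epsilon>' by linarith
  then have "(Bw v ^^ k) y \<in> basicU q \<epsilon>"
    using basicU_rescale[OF hU S assms(9) Bw_power_l2(1)[OF weights_le_2[OF v] y] coords] by simp
  moreover have "real_of_rat \<epsilon>' * 2 powi (- int k) \<le> real_of_rat \<epsilon> * 2 powi (- int k)"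
    using \<epsilon>' by (rule mult_right_mono) simp
  then have "tailnorm y (k + ?m) < real_of_rat \<epsilon> * 2 powi (- int k)" using yt by linarith
  ultimately show ?thesis using nice unfolding maps_nicely_def by auto
qed

lemma rescaling_words:
  assumes w: "w \<in> weights" and \<alpha>: "set \<alpha> \<subseteq> {1, 2}"
  obtains S :: rat and K where "0 < S"
    and "\<And>k m. K \<le> k \<Longrightarrow> m \<le> k \<Longrightarrow> \<exists>\<beta>. take (length \<alpha>) \<beta> = \<alpha> \<and> length \<beta> = k + m \<and>
      set \<beta> \<subseteq> {1, 2} \<and> nice_at (plus_ext \<beta>) m k \<and>
      real (\<Prod>j<k. plus_ext \<beta> j) = real_of_rat S * real (\<Prod>j<k. w j)"
proof -
  define ones where "ones k = card {j. j < k \<and> w j = 1}" for k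
  have "mono ones" unfolding ones_def by (intro monoI card_mono) auto
  moreover have ones_le: "ones k \<le> k" for k
    unfolding ones_def using card_mono[OF finite_lessThan[of k], of "{j. j < k \<and> w j = 1}"] by auto
  ultimately obtain n K where window: "\<And>k. K \<le> k \<Longrightarrow> n \<le> ones k \<and> ones k + length \<alpha> \<le> k + n"
    using mono_le_id_eventually_window[of ones "length \<alpha>"] unfolding eventually_sequentially by blast
  define S :: rat where "S = of_nat (prod_list \<alpha>) * 2 ^ n / 2 ^ length \<alpha>"
  have "0 < prod_list \<alpha>" using \<alpha> prod_list_zero_iff[of \<alpha>] by (auto intro: gr0I)
  then have "0 < S" by (simp add: S_def)
  have S_eq: "real (prod_list \<alpha>) * 2 ^ n = real_of_rat S * 2 ^ length \<alpha>"
    by (simp add: S_def of_rat_divide of_rat_mult of_rat_power)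
  have "\<exists>\<beta>. take (length \<alpha>) \<beta> = \<alpha> \<and> length \<beta> = k + m \<and> set \<beta> \<subseteq> {1, 2} \<and>
      nice_at (plus_ext \<beta>) m k \<and> real (\<Prod>j<k. plus_ext \<beta> j) = real_of_rat S * real (\<Prod>j<k. w j)"
    if k: "max K (length \<alpha>) \<le> k" and "m \<le> k" for k m
  proof -
    define e where "e = k - ones k + n - length \<alpha>"
    have e: "length \<alpha> + e \<le> k" "e + length \<alpha> = (k - ones k) + n"
      using window[of k] k ones_le[of k] unfolding e_def by auto
    obtain \<beta> where \<beta>: "take (length \<alpha>) \<beta> = \<alpha>" "length \<beta> = k + m" "set \<beta> \<subseteq> {1, 2}"
      "nice_at (plus_ext \<beta>) m k" and prod: "(\<Prod>j<k. plus_ext \<beta> j) = prod_list \<alpha> * 2 ^ e"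
      using word_with_prefix_and_product[OF \<alpha> e(1) \<open>m \<le> k\<close>] by blast
    have "2 ^ (k - ones k) = (\<Prod>j<k. w j)" by (simp add: prod_weights_eq_power[OF w] ones_def)
    then have "(\<Prod>j<k. plus_ext \<beta> j) * 2 ^ length \<alpha> = prod_list \<alpha> * 2 ^ n * (\<Prod>j<k. w j)"
      by (simp only: prod mult.assoc power_add[symmetric] e(2)) (simp only: power_add mult_ac)
    then have "real (\<Prod>j<k. plus_ext \<beta> j) * 2 ^ length \<alpha>
        = real (prod_list \<alpha>) * 2 ^ n * real (\<Prod>j<k. w j)"
      by (metis (mono_tags) of_nat_mult of_nat_power of_nat_numeral)
    then have "real (\<Prod>j<k. plus_ext \<beta> j) * 2 ^ length \<alpha>
        = (real_of_rat S * real (\<Prod>j<k. w j)) * 2 ^ length \<alpha>"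
      unfolding S_eq by (simp only: mult_ac)
    then have "real (\<Prod>j<k. plus_ext \<beta> j) = real_of_rat S * real (\<Prod>j<k. w j)"
      by (rule mult_right_cancel[THEN iffD1, rotated]) simp
    with \<beta> show ?thesis by blast
  qed
  then show thesis using that[of S "max K (length \<alpha>)"] \<open>0 < S\<close> by auto
qed

theorem lemma11:
  fixes \<alpha> :: "nat list" and r q :: "rat list" and \<delta> \<epsilon> :: rat
    and y :: "nat \<Rightarrow> real"
  assumes "is_condition \<alpha> r \<delta>"
    and "y \<in> l2"
    and "nicely_hypercyclic y"
    and "\<epsilon> > 0"
  shows "\<exists>\<beta> s \<eta>. is_condition \<beta> s \<eta> \<and> cond_less \<beta> s \<eta> \<alpha> r \<delta> \<and>
           (\<exists>k \<le> length \<beta>. maps_nicely (plus_ext \<beta>) k y q \<epsilon>)"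
proof -
  obtain w where w: "w \<in> weights" and late: "\<And>q \<epsilon> K. 0 < \<epsilon> \<Longrightarrow> \<exists>k\<ge>K. maps_nicely w k y q \<epsilon>"
    using nicely_hypercyclic_late_hits[OF assms(2,3)] by blast
  have \<alpha>: "set \<alpha> \<subseteq> {1, 2}" using assms(1) unfolding is_condition_def by simp
  obtain S K where S: "0 < S" and words: "\<And>k m. K \<le> k \<Longrightarrow> m \<le> k \<Longrightarrow> \<exists>\<beta>.
      take (length \<alpha>) \<beta> = \<alpha> \<and> length \<beta> = k + m \<and> set \<beta> \<subseteq> {1, 2} \<and> nice_at (plus_ext \<beta>) m k \<and>
      real (\<Prod>j<k. plus_ext \<beta> j) = real_of_rat S * real (\<Prod>j<k. w j)"
    using rescaling_words[OF w \<alpha>] by blast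
  have "0 < min \<epsilon> (\<epsilon> / S)" using assms(4) S by simp
  then obtain k where k: "max K (length q) \<le> k"
    and hit: "maps_nicely w k y (map (\<lambda>t. t / S) q) (min \<epsilon> (\<epsilon> / S))"
    using late by blast
  then obtain \<beta> where prefix: "take (length \<alpha>) \<beta> = \<alpha>" and len: "length \<beta> = k + length q"
    and \<beta>: "set \<beta> \<subseteq> {1, 2}" and nice: "nice_at (plus_ext \<beta>) (length q) k"
    and prod: "real (\<Prod>j<k. plus_ext \<beta> j) = real_of_rat S * real (\<Prod>j<k. w j)"
    using words[of k "length q"] by auto
  have "min \<epsilon> (\<epsilon> / S) * S \<le> \<epsilon>"
    using mult_right_mono[of "min \<epsilon> (\<epsilon> / S)" "\<epsilon> / S" S] S by simp
  then have "maps_nicely (plus_ext \<beta>) k y q \<epsilon>"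
    using maps_nicely_rescale[OF hit plus_ext_in_weights[OF \<beta>] w assms(2) nice prod S] by simp
  moreover obtain \<eta> where "is_condition \<beta> r \<eta> \<and> cond_less \<beta> r \<eta> \<alpha> r \<delta>"
    using exists_condition_below[OF assms(1) \<beta> prefix] by blast
  ultimately show ?thesis
    using len by (intro exI[of _ \<beta>] exI[of _ r] exI[of _ \<eta>]) (auto intro!: exI[of _ k])
qed

end
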